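(* Let $f$ be a real function defined on $\mathbb{T}^\kappa=\{a,\dots,b-1\}$ and $g$ a real function defined on $\mathbb{T}=\{a,\dots,b\}$. Fix $0<\alpha\le 1$ and put $\mu=1-\alpha$. Then $$\sum_{t=a}^{b-1}f(t)\,({}_a\Delta_t^{\alpha}g)(t)=f(b-1)g(b)-f(a)g(a)+\sum_{t=a}^{b-2}({}_t\Delta_{\rho(b)}^{\alpha}f)(t)\,g(t+1)$$ $$\qquad+\frac{\mu}{\Gamma(\mu+1)}\,g(a)\Bigl(\sum_{t=a}^{b-1}(t+\mu-a)^{(\mu-1)}f(t)-\sum_{t=a+1}^{b-1}(t+\mu-a-1)^{(\mu-1)}f(t)\Bigr),$$ where ${}_t\Delta_{\rho(b)}^{\alpha}f$ denotes the right fractional difference with upper endpoint $\rho(b)=b-1$.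
   Context: Let $a\in\mathbb{R}$, $b=a+k$ with $k\in\mathbb{N}$, $k\ge2$, $\mathbb{T}=\{a,a+1,\dots,b\}$, $\sigma(t)=t+1$, $\rho(t)=t-1$, $\Delta g(t)=g(t+1)-g(t)$. For real $x,y$, $x^{(y)}:=\Gamma(x+1)/\Gamma(x+1-y)$ (division at a pole yields zero). For $c\in\mathbb{T}$, $g$ defined on $\{a,\dots,c\}$ and $\nu\ge0$, define on $\{a,\dots,c\}$: left fractional sum $({}_a\Delta_t^{-\nu}g)(t):=g(t)+\frac{\nu}{\Gamma(\nu+1)}\sum_{s=a}^{t-1}(t+\nu-\sigma(s))^{(\nu-1)}g(s)$; right fractional sum with endpoint $c$: $({}_t\Delta_c^{-\nu}g)(t):=g(t)+\frac{\nu}{\Gamma(\nu+1)}\sum_{s=t+1}^{c}(s+\nu-\sigma(t))^{(\nu-1)}g(s)$. For $0<\alpha\le1$ and $\mu=1-\alpha$, the left and right fractional differences of order $\alpha$ are, for $t\in\{a,\dots,c-1\}$, $({}_a\Delta_t^{\alpha}g)(t):=\Delta\bigl({}_a\Delta^{-\mu}g\bigr)(t)$ and $({}_t\Delta_c^{\alpha}g)(t):=-\Delta\bigl({}_t\Delta_c^{-\mu}g\bigr)(t)$, where $\Delta$ acts on the function $\tau\mapsto({}_a\Delta_\tau^{-\mu}g)(\tau)$, resp. $\tau\mapsto({}_\tau\Delta_c^{-\mu}g)(\tau)$. *)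

theory Defs
  imports "HOL-Analysis.Analysis"
begin

text \<open>Generalized falling factorial x^(y) = Gamma(x+1)/Gamma(x+1-y).
  In Isabelle Gamma is 0 at its poles and division by 0 yields 0, matching the
  convention that division at a pole yields zero.\<close>
definition ffact :: "real \<Rightarrow> real \<Rightarrow> real" where
  "ffact x y = Gamma (x + 1) / Gamma (x + 1 - y)"

text \<open>Points of T are encoded as t = a + n with n a natural number.
  Left fractional sum of order nu at t = a + n:
  g(t) + nu/Gamma(nu+1) * sum_{s=a}^{t-1} (t + nu - sigma(s))^(nu-1) g(s),
  with s = a + i, so t + nu - sigma(s) = n + nu - i - 1.\<close>
definition left_fsum :: "real \<Rightarrow> real \<Rightarrow> (real \<Rightarrow> real) \<Rightarrow> nat \<Rightarrow> real" where
  "left_fsum nu a g n = g (a + real n) + nu / Gamma (nu + 1) *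
     (\<Sum>i<n. ffact (real n + nu - real i - 1) (nu - 1) * g (a + real i))"

text \<open>Right fractional sum of order nu with endpoint c = a + m at t = a + n:
  g(t) + nu/Gamma(nu+1) * sum_{s=t+1}^{c} (s + nu - sigma(t))^(nu-1) g(s),
  with s = a + j.\<close>
definition right_fsum :: "real \<Rightarrow> real \<Rightarrow> nat \<Rightarrow> (real \<Rightarrow> real) \<Rightarrow> nat \<Rightarrow> real" where
  "right_fsum nu a m g n = g (a + real n) + nu / Gamma (nu + 1) *
     (\<Sum>j\<in>{n+1..m}. ffact (real j + nu - real n - 1) (nu - 1) * g (a + real j))"

definition left_fdiff :: "real \<Rightarrow> real \<Rightarrow> (real \<Rightarrow> real) \<Rightarrow> nat \<Rightarrow> real" where
  "left_fdiff alpha a g n = left_fsum (1 - alpha) a g (Suc n) - left_fsum (1 - alpha) a g n"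

definition right_fdiff :: "real \<Rightarrow> real \<Rightarrow> nat \<Rightarrow> (real \<Rightarrow> real) \<Rightarrow> nat \<Rightarrow> real" where
  "right_fdiff alpha a m g n =
     - (right_fsum (1 - alpha) a m g (Suc n) - right_fsum (1 - alpha) a m g n)"

end

theory Submission
  imports Defs
begin

(* Writing F i = f(a+i), G i = g(a+i) and K d = (d + mu - 1)^(mu-1), both
   fractional sums are "identity plus a convolution with the kernel K":
   the left sum convolves G over the past {0..<n}, the right sum convolves F
   over the future {n+1..m}.  Hence each fractional difference splits into an
   ordinary forward difference plus c = mu/Gamma(mu+1) times the difference of
   a convolution.  The theorem is then the sum of two identities:
     - classical summation by parts for the ordinary differences, and
     - an exchange-of-summation identity transposing the left convolution into
       the right one, which leaves a boundary term at the initial point.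
   The identity is purely algebraic: no restriction on alpha is needed. *)

lemma sum_by_parts:
  fixes F G :: "nat \<Rightarrow> 'a::comm_ring"
  shows "(\<Sum>i\<le>m. F i * (G (Suc i) - G i)) =
         F m * G (Suc m) - F 0 * G 0 - (\<Sum>i<m. (F (Suc i) - F i) * G (Suc i))"
  by (induction m) (auto simp: algebra_simps)

lemma sum_triangle_swap:
  fixes b :: "nat \<Rightarrow> nat \<Rightarrow> 'a::comm_monoid_add"
  shows "(\<Sum>i\<le>m. \<Sum>j\<le>i. b i j) = (\<Sum>j\<le>m. \<Sum>i\<in>{j..m}. b i j)"
proof (induction m)
  case (Suc m)
  have "(\<Sum>j\<le>Suc m. \<Sum>i\<in>{j..Suc m}. b i j) = (\<Sum>j\<le>Suc m. (\<Sum>i\<in>{j..m}. b i j) + b (Suc m) j)"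
    by (intro sum.cong refl) (simp add: atLeastAtMostSuc_conv add.commute)
  then show ?case
    using Suc by (simp add: sum.distrib)
qed simp

text \<open>Convolution with a kernel K over the past of n (left) and over the future
  of n up to the endpoint m (right); these are the non-trivial parts of the
  left and right fractional sums.\<close>
definition conv_left :: "(nat \<Rightarrow> 'a::comm_ring) \<Rightarrow> (nat \<Rightarrow> 'a) \<Rightarrow> nat \<Rightarrow> 'a" where
  "conv_left K G n = (\<Sum>j<n. K (n - j) * G j)"

definition conv_right :: "(nat \<Rightarrow> 'a::comm_ring) \<Rightarrow> nat \<Rightarrow> (nat \<Rightarrow> 'a) \<Rightarrow> nat \<Rightarrow> 'a" where
  "conv_right K m F n = (\<Sum>j\<in>{Suc n..m}. K (j - n) * F j)"

lemma conv_right_end: "conv_right K m F m = 0"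
  by (simp add: conv_right_def)

lemma sum_mult_conv_left_Suc:
  "(\<Sum>i\<le>m. F i * conv_left K G (Suc i)) =
   G 0 * (\<Sum>i\<le>m. K (Suc i) * F i) + (\<Sum>j<m. G (Suc j) * conv_right K m F j)"
proof -
  have "(\<Sum>i\<le>m. F i * conv_left K G (Suc i)) = (\<Sum>i\<le>m. \<Sum>j\<le>i. F i * K (Suc i - j) * G j)"
    by (simp add: conv_left_def sum_distrib_left lessThan_Suc_atMost mult.assoc)
  also have "\<dots> = (\<Sum>j\<le>m. G j * (\<Sum>i\<in>{j..m}. K (Suc i - j) * F i))"
    by (simp add: sum_triangle_swap sum_distrib_left algebra_simps)
  also have "\<dots> = G 0 * (\<Sum>i\<le>m. K (Suc i) * F i) + (\<Sum>j<m. G (Suc j) * conv_right K m F j)"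
    by (simp add: sum.atMost_shift conv_right_def atLeast0AtMost)
  finally show ?thesis .
qed

lemma sum_mult_conv_left:
  "(\<Sum>i\<le>m. F i * conv_left K G i) =
   G 0 * conv_right K m F 0 + (\<Sum>j<m. G (Suc j) * conv_right K m F (Suc j))"
proof -
  have "(\<Sum>i\<le>m. F i * conv_left K G i) = (\<Sum>i\<le>m. \<Sum>j<i. F i * K (i - j) * G j)"
    by (simp add: conv_left_def sum_distrib_left mult.assoc)
  also have "\<dots> = (\<Sum>j<m. G j * conv_right K m F j)"
    by (simp add: sum.nested_swap' conv_right_def sum_distrib_left algebra_simps)
  also have "\<dots> = (\<Sum>j\<le>m. G j * conv_right K m F j)"
    by (simp add: lessThan_Suc_atMost[symmetric] conv_right_end)
  also have "\<dots> = G 0 * conv_right K m F 0 + (\<Sum>j<m. G (Suc j) * conv_right K m F (Suc j))"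
    by (rule sum.atMost_shift)
  finally show ?thesis .
qed

lemma conv_sum_by_parts:
  "(\<Sum>i\<le>m. F i * (conv_left K G (Suc i) - conv_left K G i)) =
   G 0 * ((\<Sum>i\<le>m. K (Suc i) * F i) - conv_right K m F 0)
   - (\<Sum>i<m. (conv_right K m F (Suc i) - conv_right K m F i) * G (Suc i))"
  by (simp add: right_diff_distrib sum_subtractf sum_mult_conv_left_Suc sum_mult_conv_left
      algebra_simps)

definition frac_kernel :: "real \<Rightarrow> nat \<Rightarrow> real" where
  "frac_kernel nu d = ffact (real d + nu - 1) (nu - 1)"

lemma left_fsum_conv:
  "left_fsum nu a g n =
   g (a + real n) + nu / Gamma (nu + 1) * conv_left (frac_kernel nu) (\<lambda>i. g (a + real i)) n"
  unfolding left_fsum_def conv_left_def frac_kernel_def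
  by (simp add: of_nat_diff algebra_simps)

lemma right_fsum_conv:
  "right_fsum nu a m f n =
   f (a + real n) + nu / Gamma (nu + 1) * conv_right (frac_kernel nu) m (\<lambda>j. f (a + real j)) n"
proof -
  have "(\<Sum>j\<in>{n+1..m}. ffact (real j + nu - real n - 1) (nu - 1) * f (a + real j))
      = conv_right (frac_kernel nu) m (\<lambda>j. f (a + real j)) n"
    unfolding conv_right_def frac_kernel_def
    by (intro sum.cong) (auto simp: of_nat_diff algebra_simps)
  then show ?thesis
    by (simp add: right_fsum_def)
qed

lemma left_fdiff_conv:
  "left_fdiff alpha a g n =
   (g (a + real (Suc n)) - g (a + real n)) + (1 - alpha) / Gamma (2 - alpha) *
   (conv_left (frac_kernel (1 - alpha)) (\<lambda>i. g (a + real i)) (Suc n)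
    - conv_left (frac_kernel (1 - alpha)) (\<lambda>i. g (a + real i)) n)"
  by (simp add: left_fdiff_def left_fsum_conv algebra_simps)

lemma right_fdiff_conv:
  "right_fdiff alpha a m f n =
   - (f (a + real (Suc n)) - f (a + real n)) - (1 - alpha) / Gamma (2 - alpha) *
   (conv_right (frac_kernel (1 - alpha)) m (\<lambda>j. f (a + real j)) (Suc n)
    - conv_right (frac_kernel (1 - alpha)) m (\<lambda>j. f (a + real j)) n)"
  by (simp add: right_fdiff_def right_fsum_conv algebra_simps)

lemma fractional_sum_by_parts:
  fixes a alpha :: real and m :: nat and f g :: "real \<Rightarrow> real"
  defines "F \<equiv> \<lambda>i. f (a + real i)" and "G \<equiv> \<lambda>i. g (a + real i)"
    and "K \<equiv> frac_kernel (1 - alpha)" and "c \<equiv> (1 - alpha) / Gamma (2 - alpha)"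
  shows "(\<Sum>i\<le>m. F i * left_fdiff alpha a g i) =
    F m * G (Suc m) - F 0 * G 0 + (\<Sum>i<m. right_fdiff alpha a m f i * G (Suc i))
    + c * G 0 * ((\<Sum>i\<le>m. K (Suc i) * F i) - conv_right K m F 0)"
proof -
  have left_diff: "left_fdiff alpha a g i =
      (G (Suc i) - G i) + c * (conv_left K G (Suc i) - conv_left K G i)" for i
    by (simp add: left_fdiff_conv F_def G_def K_def c_def)
  have right_diff: "right_fdiff alpha a m f i =
      - (F (Suc i) - F i) - c * (conv_right K m F (Suc i) - conv_right K m F i)" for i
    by (simp add: right_fdiff_conv F_def G_def K_def c_def)
  have right_sum: "(\<Sum>i<m. right_fdiff alpha a m f i * G (Suc i)) =
      - (\<Sum>i<m. (F (Suc i) - F i) * G (Suc i))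
      - c * (\<Sum>i<m. (conv_right K m F (Suc i) - conv_right K m F i) * G (Suc i))"
    by (simp add: right_diff sum_distrib_left flip: sum_subtractf sum_negf)
      (simp add: algebra_simps)
  have "(\<Sum>i\<le>m. F i * left_fdiff alpha a g i) =
      (\<Sum>i\<le>m. F i * (G (Suc i) - G i))
      + c * (\<Sum>i\<le>m. F i * (conv_left K G (Suc i) - conv_left K G i))"
    by (simp add: left_diff sum_distrib_left flip: sum.distrib) (simp add: algebra_simps)
  also have "\<dots> = F m * G (Suc m) - F 0 * G 0 - (\<Sum>i<m. (F (Suc i) - F i) * G (Suc i))
      + c * (G 0 * ((\<Sum>i\<le>m. K (Suc i) * F i) - conv_right K m F 0)
        - (\<Sum>i<m. (conv_right K m F (Suc i) - conv_right K m F i) * G (Suc i)))"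
    by (simp only: sum_by_parts[of F G] conv_sum_by_parts)
  also have "\<dots> = F m * G (Suc m) - F 0 * G 0 + (\<Sum>i<m. right_fdiff alpha a m f i * G (Suc i))
    + c * G 0 * ((\<Sum>i\<le>m. K (Suc i) * F i) - conv_right K m F 0)"
    using right_sum by (simp add: algebra_simps)
  finally show ?thesis .
qed

text \<open>The theorem: the previous lemma with k = m + 1, the boundary term written
  out with the falling factorial.\<close>
theorem theorem3:
  fixes a alpha :: real and k :: nat and f g :: "real \<Rightarrow> real"
  assumes "k \<ge> 2" and "0 < alpha" and "alpha \<le> 1"
  shows "(\<Sum>i<k. f (a + real i) * left_fdiff alpha a g i) =
      f (a + real k - 1) * g (a + real k) - f a * g a
      + (\<Sum>i<k - 1. right_fdiff alpha a (k - 1) f i * g (a + real i + 1))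
      + (1 - alpha) / Gamma ((1 - alpha) + 1) * g a *
        ((\<Sum>i<k. ffact (real i + (1 - alpha)) ((1 - alpha) - 1) * f (a + real i))
         - (\<Sum>i\<in>{1..<k}. ffact (real i + (1 - alpha) - 1) ((1 - alpha) - 1) * f (a + real i)))"
proof -
  obtain m where k: "k = Suc m"
    using assms(1) by (cases k) auto
  have kernel_sum: "(\<Sum>i<k. ffact (real i + (1 - alpha)) ((1 - alpha) - 1) * f (a + real i))
      = (\<Sum>i\<le>m. frac_kernel (1 - alpha) (Suc i) * f (a + real i))"
    by (simp add: k lessThan_Suc_atMost frac_kernel_def algebra_simps)
  have initial_tail: "(\<Sum>i\<in>{1..<k}. ffact (real i + (1 - alpha) - 1) ((1 - alpha) - 1) * f (a + real i))
      = conv_right (frac_kernel (1 - alpha)) m (\<lambda>j. f (a + real j)) 0"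
    by (simp add: k conv_right_def frac_kernel_def atLeastLessThanSuc_atLeastAtMost)
  show ?thesis
    unfolding kernel_sum initial_tail
    using fractional_sum_by_parts[where a = a and alpha = alpha and m = m and f = f and g = g]
    by (simp add: k lessThan_Suc_atMost algebra_simps)
qed

end
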